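(* Let $f:\mathbb{Z}^+\to \{-1,1\}$ be a function such that $|f([n])|\leq \frac{n}{\omega (n)}$ for all $n$, where $\omega$ is a function with $\omega(n)\to \infty$ as $n \to \infty$. Then, for every even $k\geq 2$, there are infinitely many $k$-blocks $B\subseteq \mathbb{Z}^+$ with $f(B)=0$.
   Context: $[n]=\{1,\dots,n\}$; for a finite set $Y$, $f(Y)=\sum_{y\in Y}f(y)$; a $k$-block is a set of $k$ consecutive integers. *)

theory Defs
  imports "HOL-Analysis.Analysis"
begin

end

theory Submission
  imports Defs
begin

text \<open>All k-block sums are even and consecutive ones differ by at most 2, so if only
  finitely many of them vanish, they eventually have constant sign. Then, from some point on,
  every k-block sums to at least 1 (or to at most -1), so the partial sums grow at least like n/k,
  contradicting the discrepancy bound n/\<omega>(n) = o(n).\<close>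

lemma sum_block_Suc:
  fixes f :: "nat \<Rightarrow> 'a::ab_group_add"
  shows "(\<Sum>i\<in>{Suc a..<Suc a+k}. f i) = (\<Sum>i\<in>{a..<a+k}. f i) + f (a+k) - f a"
proof -
  have "(\<Sum>i\<in>{Suc a..<Suc a+k}. f i) + f a = (\<Sum>i\<in>insert a {Suc a..<Suc a+k}. f i)"
    by simp
  also have "insert a {Suc a..<Suc a+k} = insert (a+k) {a..<a+k}"
    by auto
  also have "(\<Sum>i\<in>\<dots>. f i) = f (a+k) + (\<Sum>i\<in>{a..<a+k}. f i)"
    by simp
  finally show ?thesis
    by (simp add: algebra_simps eq_diff_eq)
qed

lemma sum_block_pm1:
  fixes f :: "nat \<Rightarrow> int"
  assumes pm: "\<And>i. i \<ge> a \<Longrightarrow> f i \<in> {-1, 1}" and "even k"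
  shows "even (\<Sum>i\<in>{a..<a+k}. f i)"
    and "\<bar>(\<Sum>i\<in>{Suc a..<Suc a+k}. f i) - (\<Sum>i\<in>{a..<a+k}. f i)\<bar> \<le> 2"
proof -
  have "{i \<in> {a..<a+k}. odd (f i)} = {a..<a+k}"
    using pm by fastforce
  then show "even (\<Sum>i\<in>{a..<a+k}. f i)"
    using \<open>even k\<close> by (simp add: even_sum_iff)
  show "\<bar>(\<Sum>i\<in>{Suc a..<Suc a+k}. f i) - (\<Sum>i\<in>{a..<a+k}. f i)\<bar> \<le> 2"
    using pm[of a] pm[of "a+k"] by (simp only: sum_block_Suc) auto
qed

lemma sign_persistent_even_steps:
  fixes h :: "nat \<Rightarrow> int"
  assumes steps: "\<And>a. a \<ge> N \<Longrightarrow> even (h a) \<and> h a \<noteq> 0 \<and> \<bar>h (Suc a) - h a\<bar> \<le> 2"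
    and "h N > 0" and "a \<ge> N"
  shows "h a > 0"
  using \<open>a \<ge> N\<close>
proof (induction a rule: dec_induct)
  case base
  show ?case using \<open>h N > 0\<close> .
next
  case (step a)
  then have "h a \<ge> 2"
    using steps[of a] by presburger
  then show ?case
    using steps[of a] steps[of "Suc a"] step.hyps by auto
qed

lemma eventually_constant_sign_even_steps:
  fixes h :: "nat \<Rightarrow> int"
  assumes steps: "\<And>a. a \<ge> N \<Longrightarrow> even (h a) \<and> h a \<noteq> 0 \<and> \<bar>h (Suc a) - h a\<bar> \<le> 2"
  shows "(\<forall>a\<ge>N. h a > 0) \<or> (\<forall>a\<ge>N. h a < 0)"
proof (cases "h N > 0")
  case True
  then show ?thesis
    using sign_persistent_even_steps[of N h] steps by blast
next
  case False
  then have "- h N > 0"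
    using steps[of N] by simp
  moreover have "even (- h a) \<and> - h a \<noteq> 0 \<and> \<bar>- h (Suc a) - - h a\<bar> \<le> 2" if "a \<ge> N" for a
    using steps[OF that] by (simp add: abs_minus_commute)
  ultimately show ?thesis
    using sign_persistent_even_steps[of N "\<lambda>a. - h a"] by force
qed

lemma sublinear_of_discrepancy_bound:
  fixes f :: "nat \<Rightarrow> int" and \<omega> :: "nat \<Rightarrow> real"
  assumes omega_lim: "filterlim \<omega> at_top sequentially"
    and disc: "\<And>n. n \<ge> 1 \<Longrightarrow> \<bar>real_of_int (\<Sum>i\<in>{1..n}. f i)\<bar> \<le> real n / \<omega> n"
    and "c > 0"
  shows "\<forall>\<^sub>F n in sequentially. \<bar>real_of_int (\<Sum>i\<in>{1..n}. f i)\<bar> \<le> c * real n"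
proof -
  have "\<forall>\<^sub>F n in sequentially. 1 / c \<le> \<omega> n \<and> n \<ge> 1"
    using omega_lim by (simp add: filterlim_at_top eventually_conj eventually_ge_at_top)
  then show ?thesis
  proof eventually_elim
    case (elim n)
    then have "\<omega> n > 0"
      using \<open>c > 0\<close> by (smt (verit) divide_pos_pos)
    then have "real n / \<omega> n \<le> c * real n"
      using elim \<open>c > 0\<close> by (simp add: divide_simps mult.commute mult_left_mono)
    then show ?case
      using disc elim by (meson order_trans)
  qed
qed

lemma sum_blocks_ge:
  fixes f :: "nat \<Rightarrow> int"
  assumes "\<And>a. a \<ge> N \<Longrightarrow> (\<Sum>i\<in>{a..<a+k}. f i) \<ge> 1"
  shows "(\<Sum>i\<in>{N..<N+m*k}. f i) \<ge> int m"
proof (induction m)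
  case (Suc m)
  have "(\<Sum>i\<in>{N..<N+Suc m*k}. f i)
      = (\<Sum>i\<in>{N..<N+m*k}. f i) + (\<Sum>i\<in>{N+m*k..<N+m*k+k}. f i)"
    by (subst sum.atLeastLessThan_concat[symmetric, of N "N+m*k"]) (auto simp: algebra_simps)
  then show ?case
    using Suc assms[of "N+m*k"] by simp
qed simp

lemma positive_blocks_not_sublinear:
  fixes f :: "nat \<Rightarrow> int"
  assumes "k \<ge> 1" and "N \<ge> 1"
    and blocks: "\<And>a. a \<ge> N \<Longrightarrow> (\<Sum>i\<in>{a..<a+k}. f i) \<ge> 1"
    and sublinear: "\<And>c. c > 0 \<Longrightarrow>
      \<forall>\<^sub>F n in sequentially. \<bar>real_of_int (\<Sum>i\<in>{1..n}. f i)\<bar> \<le> c * real n"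
  shows False
proof -
  define S where "S n = (\<Sum>i\<in>{1..n}. f i)" for n
  obtain M where M: "\<And>n. n \<ge> M \<Longrightarrow> \<bar>real_of_int (S n)\<bar> \<le> real n / (2 * real k)"
    using sublinear[of "1 / (2 * real k)"] \<open>k \<ge> 1\<close>
    by (auto simp: eventually_sequentially S_def)
  \<comment> \<open>The blocks force S n \<ge> S (N-1) + m, sublinearity only S n \<le> N + m/2; m is large enough.\<close>
  define m where "m = M + 2 * (N + nat \<bar>S (N-1)\<bar>) + 1"
  define n where "n = N - 1 + m * k"
  have "S n = S (N-1) + (\<Sum>i\<in>{N..<N+m*k}. f i)"
  proof -
    have "S n = (\<Sum>i\<in>{1..<N+m*k}. f i)" "S (N-1) = (\<Sum>i\<in>{1..<N}. f i)"
      unfolding S_def n_def using \<open>N \<ge> 1\<close> by (auto intro!: sum.cong)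
    then show ?thesis
      using \<open>N \<ge> 1\<close> by (simp add: sum.atLeastLessThan_concat)
  qed
  then have lower: "S n \<ge> S (N-1) + int m"
    using sum_blocks_ge[OF blocks] by simp
  have "M \<le> m"
    unfolding m_def by simp
  moreover have "m \<le> m * k"
    using \<open>k \<ge> 1\<close> by simp
  ultimately have "n \<ge> M"
    unfolding n_def by linarith
  then have "real_of_int (S n) \<le> real (N-1) / (2 * real k) + real m / 2"
    using M[of n] \<open>k \<ge> 1\<close> by (simp add: n_def add_divide_distrib)
  also have "\<dots> \<le> real (N-1) + real m / 2"
    using \<open>k \<ge> 1\<close> by (simp add: divide_le_eq mult_le_cancel_left1)
  finally have "real_of_int (S n) \<le> real (N-1) + real m / 2" .
  moreover have "real_of_int (S (N-1)) + real m \<le> real_of_int (S n)"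
    using lower by (metis of_int_add of_int_le_iff of_int_of_nat_eq)
  moreover have "real m = real M + 2 * real N + 2 * \<bar>real_of_int (S (N-1))\<bar> + 1"
    unfolding m_def by simp
  moreover have "real (N-1) \<le> real N"
    by simp
  ultimately show False
    by linarith
qed

lemma negative_blocks_not_sublinear:
  fixes f :: "nat \<Rightarrow> int"
  assumes "k \<ge> 1" and "N \<ge> 1"
    and blocks: "\<And>a. a \<ge> N \<Longrightarrow> (\<Sum>i\<in>{a..<a+k}. f i) \<le> -1"
    and sublinear: "\<And>c. c > 0 \<Longrightarrow>
      \<forall>\<^sub>F n in sequentially. \<bar>real_of_int (\<Sum>i\<in>{1..n}. f i)\<bar> \<le> c * real n"
  shows False
proof (rule positive_blocks_not_sublinear[of k N "\<lambda>i. - f i"])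
  show "1 \<le> (\<Sum>i\<in>{a..<a+k}. - f i)" if "a \<ge> N" for a
    using blocks[OF that] by (simp add: sum_negf)
  show "\<forall>\<^sub>F n in sequentially. \<bar>real_of_int (\<Sum>i\<in>{1..n}. - f i)\<bar> \<le> c * real n"
    if "c > 0" for c
    using sublinear[OF that] by (simp add: sum_negf)
qed (use assms in auto)

theorem theorem2p8:
  fixes f :: "nat \<Rightarrow> int" and \<omega> :: "nat \<Rightarrow> real" and k :: nat
  assumes pm1: "\<And>n. n \<ge> 1 \<Longrightarrow> f n \<in> {-1, 1}"
    and omega_lim: "filterlim \<omega> at_top sequentially"
    and disc: "\<And>n. n \<ge> 1 \<Longrightarrow> \<bar>real_of_int (\<Sum>i\<in>{1..n}. f i)\<bar> \<le> real n / \<omega> n"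
    and k_even: "even k" and k_ge: "k \<ge> 2"
  shows "infinite {a::nat. a \<ge> 1 \<and> (\<Sum>i\<in>{a..<a+k}. f i) = 0}"
proof
  define g where "g a = (\<Sum>i\<in>{a..<a+k}. f i)" for a
  assume "finite {a::nat. a \<ge> 1 \<and> (\<Sum>i\<in>{a..<a+k}. f i) = 0}"
  then obtain N0 where N0: "\<And>a. a \<ge> 1 \<Longrightarrow> g a = 0 \<Longrightarrow> a \<le> N0"
    unfolding g_def finite_nat_set_iff_bounded_le by blast
  define N where "N = Suc N0"
  have "N \<ge> 1" "k \<ge> 1"
    using k_ge by (simp_all add: N_def)
  have "even (g a) \<and> g a \<noteq> 0 \<and> \<bar>g (Suc a) - g a\<bar> \<le> 2" if "a \<ge> N" for a
    using sum_block_pm1[of a f k] pm1 N0[of a] that k_even by (auto simp: g_def N_def)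
  then consider "\<forall>a\<ge>N. g a > 0" | "\<forall>a\<ge>N. g a < 0"
    using eventually_constant_sign_even_steps by blast
  then show False
  proof cases
    case 1
    then show False
      using positive_blocks_not_sublinear[OF \<open>k \<ge> 1\<close> \<open>N \<ge> 1\<close> _
          sublinear_of_discrepancy_bound[OF omega_lim disc]]
      by (simp add: g_def int_one_le_iff_zero_less)
  next
    case 2
    then show False
      using negative_blocks_not_sublinear[OF \<open>k \<ge> 1\<close> \<open>N \<ge> 1\<close> _
          sublinear_of_discrepancy_bound[OF omega_lim disc]]
      by (force simp: g_def)
  qed
qed

end
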